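(* Every topological space $X$ is $\Gamma$-embedded in $\mathcal{K}(X)$, the hyperspace of all nonempty compact subsets of $X$ with the Vietoris topology; namely via the embedding $c\colon X\to\mathcal K(X)$, $x\mapsto\{x\}$, and the semigroup homomorphism $\sigma\colon\Gamma(X)\to\Gamma(\mathcal K(X))$ given by $\sigma(1_\emptyset)=1_\emptyset$ and, for $f$ with nonempty domain, $\sigma(f)\colon \mathrm{dom}(f)^+\to\mathrm{im}(f)^+$, $A\mapsto f(A)$.
   Context: The Vietoris topology on $\mathcal K(X)$ has subbasis the sets $V^-=\{A\in\mathcal K(X): A\cap V\ne\emptyset\}$ and $V^+=\{A\in\mathcal K(X): A\subset V\}$ for $V\subset X$ nonempty open. For a topological space $X$, $\Gamma(X)$ is the inverse monoid of homeomorphisms between open subsets of $X$ (including the empty map $1_\emptyset$), with product $\psi\circ\phi\colon \phi^{-1}(\mathrm{dom}(\psi)\cap\mathrm{im}(\phi))\to\psi(\mathrm{dom}(\psi)\cap\mathrm{im}(\phi))$. Let $\Gamma(X)*X=\{(f,x)\in\Gamma(X)\times X: x\in\mathrm{dom}(f)\}$. $X$ is $\Gamma$-embedded in a space $Z$ if there exist a semigroup homomorphism $\sigma\colon\Gamma(X)\to\Gamma(Z)$ and a topological embedding $c\colon X\to Z$ such that for every $(f,x)\in\Gamma(X)*X$ one has $c(x)\in\mathrm{dom}(\sigma(f))$ and $\sigma(f)(c(x))=c(f(x))$. *)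

theory Defs
  imports "HOL-Analysis.Analysis"
begin

definition Kset :: "'a topology \<Rightarrow> 'a set set" where
  "Kset X = {A. compactin X A \<and> A \<noteq> {}}"

definition vietoris_subbasis :: "'a topology \<Rightarrow> 'a set set set" where
  "vietoris_subbasis X =
     {{A \<in> Kset X. A \<inter> V \<noteq> {}} | V. openin X V \<and> V \<noteq> {}} \<union>
     {{A \<in> Kset X. A \<subseteq> V} | V. openin X V \<and> V \<noteq> {}}"

definition vietoris :: "'a topology \<Rightarrow> 'a set topology" where
  "vietoris X = topology_generated_by (vietoris_subbasis X)"

text \<open>Partial maps are represented as maps 'a => 'a option; the domain is dom f,
  the image is ran f, and the product of the inverse monoid is map composition.\<close>
definition Gamma :: "'a topology \<Rightarrow> ('a \<rightharpoonup> 'a) set" where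
  "Gamma X = {f. openin X (dom f) \<and> openin X (ran f) \<and>
      homeomorphic_map (subtopology X (dom f)) (subtopology X (ran f)) (\<lambda>x. the (f x))}"

definition semigroup_hom :: "'a topology \<Rightarrow> 'b topology \<Rightarrow> (('a \<rightharpoonup> 'a) \<Rightarrow> ('b \<rightharpoonup> 'b)) \<Rightarrow> bool" where
  "semigroup_hom X Z \<sigma> \<longleftrightarrow> (\<forall>f\<in>Gamma X. \<sigma> f \<in> Gamma Z) \<and>
     (\<forall>\<psi>\<in>Gamma X. \<forall>\<phi>\<in>Gamma X. \<sigma> (\<psi> \<circ>\<^sub>m \<phi>) = \<sigma> \<psi> \<circ>\<^sub>m \<sigma> \<phi>)"

definition Gamma_embedding_via ::
  "'a topology \<Rightarrow> 'b topology \<Rightarrow> (('a \<rightharpoonup> 'a) \<Rightarrow> ('b \<rightharpoonup> 'b)) \<Rightarrow> ('a \<Rightarrow> 'b) \<Rightarrow> bool" where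
  "Gamma_embedding_via X Z \<sigma> c \<longleftrightarrow> semigroup_hom X Z \<sigma> \<and> embedding_map X Z c \<and>
     (\<forall>f\<in>Gamma X. \<forall>x\<in>dom f. c x \<in> dom (\<sigma> f) \<and> \<sigma> f (c x) = Some (c (the (f x))))"

definition Gamma_embedded :: "'a topology \<Rightarrow> 'b topology \<Rightarrow> bool" where
  "Gamma_embedded X Z \<longleftrightarrow> (\<exists>\<sigma> c. Gamma_embedding_via X Z \<sigma> c)"

definition hyper_sigma :: "'a topology \<Rightarrow> ('a \<rightharpoonup> 'a) \<Rightarrow> ('a set \<rightharpoonup> 'a set)" where
  "hyper_sigma X f = (if f = Map.empty then Map.empty
      else (\<lambda>A. if A \<in> Kset X \<and> A \<subseteq> dom f then Some ((\<lambda>x. the (f x)) ` A) else None))"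

end

theory Submission
  imports Defs
begin

(* A homeomorphism h between open sets U and V of X induces, by taking images, a homeomorphism
   A \<mapsto> h(A) between the Vietoris-open sets U^+ and V^+: continuous images of compact sets are
   compact, and A \<mapsto> h(A) pulls the subbasic sets W^- and W^+ back to (h^-1 W)^- and (h^-1 W)^+
   inside U^+. Taking images commutes with composition, so \<sigma> is a homomorphism, and
   \<sigma>(f){x} = {f x}. Finally x \<mapsto> {x} is an embedding: it pulls W^- and W^+ back to W, and the
   inverse map on singletons pulls W back to W^+. *)

definition vietoris_plus :: "'a topology \<Rightarrow> 'a set \<Rightarrow> 'a set set" where
  "vietoris_plus X V = {A \<in> Kset X. A \<subseteq> V}"

definition vietoris_minus :: "'a topology \<Rightarrow> 'a set \<Rightarrow> 'a set set" where
  "vietoris_minus X V = {A \<in> Kset X. A \<inter> V \<noteq> {}}"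

lemma Kset_subset_topspace: "A \<in> Kset X \<Longrightarrow> A \<subseteq> topspace X"
  by (auto simp: Kset_def dest: compactin_subset_topspace)

lemma singleton_in_Kset [simp]: "{x} \<in> Kset X \<longleftrightarrow> x \<in> topspace X"
  by (simp add: Kset_def)

lemma vietoris_plus_empty [simp]: "vietoris_plus X {} = {}"
  by (auto simp: vietoris_plus_def Kset_def)

lemma vietoris_subbasis_cases:
  assumes "S \<in> vietoris_subbasis X"
  obtains W where "openin X W" "S = vietoris_minus X W"
        | W where "openin X W" "S = vietoris_plus X W"
  using assms unfolding vietoris_subbasis_def vietoris_minus_def vietoris_plus_def by blast

lemma openin_vietoris_plus:
  assumes "openin X V"
  shows "openin (vietoris X) (vietoris_plus X V)"
proof (cases "V = {}")
  case False
  then have "vietoris_plus X V \<in> vietoris_subbasis X"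
    using assms unfolding vietoris_subbasis_def vietoris_plus_def by blast
  then show ?thesis
    unfolding vietoris_def by (rule topology_generated_by_Basis)
qed simp

lemma openin_vietoris_minus:
  assumes "openin X V"
  shows "openin (vietoris X) (vietoris_minus X V)"
proof (cases "V = {}")
  case False
  then have "vietoris_minus X V \<in> vietoris_subbasis X"
    using assms unfolding vietoris_subbasis_def vietoris_minus_def by blast
  then show ?thesis
    unfolding vietoris_def by (rule topology_generated_by_Basis)
qed (simp add: vietoris_minus_def)

lemma topspace_vietoris: "topspace (vietoris X) = Kset X"
proof
  show "topspace (vietoris X) \<subseteq> Kset X"
    by (auto simp: vietoris_def vietoris_subbasis_def)
  have "Kset X = vietoris_plus X (topspace X)"
    using Kset_subset_topspace by (auto simp: vietoris_plus_def)
  then show "Kset X \<subseteq> topspace (vietoris X)"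
    using openin_subset[OF openin_vietoris_plus[OF openin_topspace]] by simp
qed

lemma topspace_vietoris_Int_plus [simp]:
  "topspace (vietoris X) \<inter> vietoris_plus X U = vietoris_plus X U"
  using topspace_vietoris by (auto simp: vietoris_plus_def)

lemma continuous_map_into_vietoris:
  assumes into: "\<And>t. t \<in> topspace T \<Longrightarrow> f t \<in> Kset X"
    and minus: "\<And>W. openin X W \<Longrightarrow> openin T {t \<in> topspace T. f t \<in> vietoris_minus X W}"
    and plus: "\<And>W. openin X W \<Longrightarrow> openin T {t \<in> topspace T. f t \<in> vietoris_plus X W}"
  shows "continuous_map T (vietoris X) f"
  unfolding vietoris_def
proof (rule continuous_on_generated_topo)
  fix S assume "S \<in> vietoris_subbasis X"
  then show "openin T (f -` S \<inter> topspace T)"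
  proof (cases rule: vietoris_subbasis_cases)
    case (1 W)
    then show ?thesis
      using minus[of W] by (simp add: vimage_def Int_def conj_commute)
  next
    case (2 W)
    then show ?thesis
      using plus[of W] by (simp add: vimage_def Int_def conj_commute)
  qed
next
  show "f ` topspace T \<subseteq> \<Union> (vietoris_subbasis X)"
    using into topspace_vietoris[of X] by (auto simp: vietoris_def)
qed

lemma image_in_vietoris_plus:
  assumes "continuous_map (subtopology X U) (subtopology Y V) h" "A \<in> vietoris_plus X U"
  shows "h ` A \<in> vietoris_plus Y V"
proof -
  have "compactin (subtopology X U) A"
    using assms(2) by (simp add: vietoris_plus_def Kset_def compactin_subtopology)
  then have "compactin (subtopology Y V) (h ` A)"
    using assms(1) by (rule image_compactin)
  then show ?thesis
    using assms(2) by (auto simp: vietoris_plus_def Kset_def compactin_subtopology)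
qed

lemma continuous_map_vietoris_image:
  assumes U: "openin X U" and h: "continuous_map (subtopology X U) (subtopology Y V) h"
  shows "continuous_map (subtopology (vietoris X) (vietoris_plus X U))
           (subtopology (vietoris Y) (vietoris_plus Y V)) (image h)"
proof -
  let ?T = "subtopology (vietoris X) (vietoris_plus X U)"
  have image_in: "h ` A \<in> vietoris_plus Y V" if "A \<in> vietoris_plus X U" for A
    using image_in_vietoris_plus[OF h that] .
  have preimage_open: "openin X {x \<in> U. h x \<in> W}" if "openin Y W" for W
  proof -
    have "continuous_map (subtopology X U) Y h"
      using h by (simp add: continuous_map_in_subtopology)
    then have "openin (subtopology X U) {x \<in> topspace X \<inter> U. h x \<in> W}"
      by (metis openin_continuous_map_preimage that topspace_subtopology)
    then show ?thesis
      using U openin_subset[OF U] by (simp add: openin_open_subtopology Int_absorb1)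
  qed
  have "continuous_map ?T (vietoris Y) (image h)"
  proof (rule continuous_map_into_vietoris)
    show "h ` A \<in> Kset Y" if "A \<in> topspace ?T" for A
      using image_in that by (simp add: vietoris_plus_def)
  next
    fix W assume W: "openin Y W"
    have "{A \<in> topspace ?T. h ` A \<in> vietoris_minus Y W}
            = vietoris_minus X {x \<in> U. h x \<in> W} \<inter> vietoris_plus X U"
      using image_in by (auto simp: topspace_vietoris vietoris_minus_def vietoris_plus_def)
    then show "openin ?T {A \<in> topspace ?T. h ` A \<in> vietoris_minus Y W}"
      by (simp add: openin_subtopology_Int openin_vietoris_minus preimage_open[OF W])
    have "{A \<in> topspace ?T. h ` A \<in> vietoris_plus Y W}
            = vietoris_plus X {x \<in> U. h x \<in> W} \<inter> vietoris_plus X U"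
      using image_in by (auto simp: topspace_vietoris vietoris_plus_def)
    then show "openin ?T {A \<in> topspace ?T. h ` A \<in> vietoris_plus Y W}"
      by (simp add: openin_subtopology_Int openin_vietoris_plus preimage_open[OF W])
  qed
  then show ?thesis
    using image_in by (simp add: continuous_map_in_subtopology)
qed

lemma homeomorphic_map_vietoris_image:
  assumes U: "openin X U" and V: "openin Y V"
    and h: "homeomorphic_map (subtopology X U) (subtopology Y V) h"
  shows "homeomorphic_map (subtopology (vietoris X) (vietoris_plus X U))
           (subtopology (vietoris Y) (vietoris_plus Y V)) (image h)"
proof -
  obtain g where hg: "homeomorphic_maps (subtopology X U) (subtopology Y V) h g"
    using h homeomorphic_map_maps by blast
  have inverse_image: "k ` l ` A = A"
    if "A \<in> vietoris_plus Z S" and "\<forall>x \<in> topspace Z \<inter> S. k (l x) = x"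
    for Z S A and k :: "'d \<Rightarrow> 'c" and l :: "'c \<Rightarrow> 'd"
  proof -
    have "A \<subseteq> topspace Z \<inter> S"
      using that(1) Kset_subset_topspace by (fastforce simp: vietoris_plus_def)
    then show ?thesis
      using that(2) by (force simp: image_image)
  qed
  have "homeomorphic_maps (subtopology (vietoris X) (vietoris_plus X U))
          (subtopology (vietoris Y) (vietoris_plus Y V)) (image h) (image g)"
    using hg unfolding homeomorphic_maps_def
    by (simp add: continuous_map_vietoris_image U V inverse_image)
  then show ?thesis
    using homeomorphic_map_maps by blast
qed

(* The clause for the empty map in hyper_sigma is subsumed, as {}^+ = {}. *)
lemma hyper_sigma_eq:
  "hyper_sigma X f A =
     (if A \<in> vietoris_plus X (dom f) then Some ((\<lambda>x. the (f x)) ` A) else None)"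
  by (cases "f = Map.empty") (auto simp: hyper_sigma_def vietoris_plus_def Kset_def)

lemma dom_hyper_sigma: "dom (hyper_sigma X f) = vietoris_plus X (dom f)"
  by (auto simp: hyper_sigma_eq dom_def)

lemma ran_hyper_sigma:
  "ran (hyper_sigma X f) = image (\<lambda>x. the (f x)) ` vietoris_plus X (dom f)"
  by (auto simp: ran_def hyper_sigma_eq)

lemma hyper_sigma_in_Gamma:
  assumes "f \<in> Gamma X"
  shows "hyper_sigma X f \<in> Gamma (vietoris X)"
proof -
  let ?h = "\<lambda>x. the (f x)"
  have dom_open: "openin X (dom f)" and ran_open: "openin X (ran f)"
    and "homeomorphic_map (subtopology X (dom f)) (subtopology X (ran f)) ?h"
    using assms by (auto simp: Gamma_def)
  then have image_homeo:
    "homeomorphic_map (subtopology (vietoris X) (vietoris_plus X (dom f)))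
       (subtopology (vietoris X) (vietoris_plus X (ran f))) (image ?h)"
    by (rule homeomorphic_map_vietoris_image)
  have "ran (hyper_sigma X f) = vietoris_plus X (ran f)"
    using homeomorphic_imp_surjective_map[OF image_homeo] by (simp add: ran_hyper_sigma)
  moreover have "homeomorphic_map (subtopology (vietoris X) (vietoris_plus X (dom f)))
       (subtopology (vietoris X) (vietoris_plus X (ran f))) (\<lambda>A. the (hyper_sigma X f A))"
    using image_homeo by (rule homeomorphic_map_eq) (simp add: hyper_sigma_eq)
  ultimately show ?thesis
    using dom_open ran_open
    by (simp add: Gamma_def dom_hyper_sigma openin_vietoris_plus)
qed

lemma hyper_sigma_map_comp:
  assumes "\<phi> \<in> Gamma X"
  shows "hyper_sigma X (\<psi> \<circ>\<^sub>m \<phi>) = hyper_sigma X \<psi> \<circ>\<^sub>m hyper_sigma X \<phi>"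
proof
  fix A
  let ?h = "\<lambda>x. the (\<phi> x)" and ?k = "\<lambda>y. the (\<psi> y)"
  show "hyper_sigma X (\<psi> \<circ>\<^sub>m \<phi>) A = (hyper_sigma X \<psi> \<circ>\<^sub>m hyper_sigma X \<phi>) A"
  proof (cases "A \<in> vietoris_plus X (dom \<phi>)")
    case False
    moreover have "dom (\<psi> \<circ>\<^sub>m \<phi>) \<subseteq> dom \<phi>"
      by (auto simp: map_comp_Some_iff)
    ultimately show ?thesis
      by (auto simp: hyper_sigma_eq vietoris_plus_def)
  next
    case True
    have comp_apply: "(\<psi> \<circ>\<^sub>m \<phi>) x = \<psi> (?h x)" if "x \<in> A" for x
      using True that by (auto simp: vietoris_plus_def)
    have "?h ` A \<in> vietoris_plus X (ran \<phi>)"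
      using True assms
      by (auto simp: Gamma_def intro: image_in_vietoris_plus homeomorphic_imp_continuous_map)
    then have "?h ` A \<in> Kset X"
      by (simp add: vietoris_plus_def)
    moreover have "x \<in> dom (\<psi> \<circ>\<^sub>m \<phi>) \<longleftrightarrow> ?h x \<in> dom \<psi>" if "x \<in> A" for x
      by (simp add: domIff comp_apply[OF that])
    then have "A \<subseteq> dom (\<psi> \<circ>\<^sub>m \<phi>) \<longleftrightarrow> ?h ` A \<subseteq> dom \<psi>"
      by blast
    moreover have "(\<lambda>x. the ((\<psi> \<circ>\<^sub>m \<phi>) x)) ` A = ?k ` ?h ` A"
      by (force simp: comp_apply)
    ultimately show ?thesis
      using True by (simp add: hyper_sigma_eq vietoris_plus_def)
  qed
qed

lemma hyper_sigma_singleton: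
  assumes "f \<in> Gamma X" "x \<in> dom f"
  shows "hyper_sigma X f {x} = Some {the (f x)}"
proof -
  have "x \<in> topspace X"
    using assms openin_subset by (auto simp: Gamma_def)
  then show ?thesis
    using assms(2) by (simp add: hyper_sigma_eq vietoris_plus_def)
qed

lemma embedding_map_singleton_vietoris: "embedding_map X (vietoris X) (\<lambda>x. {x})"
proof -
  let ?S = "(\<lambda>x. {x}) ` topspace X"
  have topspace_S: "topspace (subtopology (vietoris X) ?S) = ?S"
    by (auto simp: topspace_vietoris)
  have "continuous_map X (vietoris X) (\<lambda>x. {x})"
  proof (rule continuous_map_into_vietoris)
    fix W assume "openin X W"
    then have "W \<subseteq> topspace X"
      by (rule openin_subset)
    then have "{x \<in> topspace X. {x} \<in> vietoris_minus X W} = W"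
      and "{x \<in> topspace X. {x} \<in> vietoris_plus X W} = W"
      by (auto simp: vietoris_minus_def vietoris_plus_def)
    with \<open>openin X W\<close>
    show "openin X {x \<in> topspace X. {x} \<in> vietoris_minus X W}"
      and "openin X {x \<in> topspace X. {x} \<in> vietoris_plus X W}"
      by simp_all
  qed simp
  then have to_S: "continuous_map X (subtopology (vietoris X) ?S) (\<lambda>x. {x})"
    by (simp add: continuous_map_in_subtopology)
  have from_S: "continuous_map (subtopology (vietoris X) ?S) X the_elem"
    unfolding continuous_map_def
  proof (intro conjI allI impI)
    show "the_elem \<in> topspace (subtopology (vietoris X) ?S) \<rightarrow> topspace X"
      using topspace_S by auto
    fix W assume "openin X W"
    have "{A \<in> topspace (subtopology (vietoris X) ?S). the_elem A \<in> W}
            = vietoris_plus X W \<inter> ?S"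
      using topspace_S by (auto simp: vietoris_plus_def)
    then show "openin (subtopology (vietoris X) ?S)
                 {A \<in> topspace (subtopology (vietoris X) ?S). the_elem A \<in> W}"
      by (simp add: openin_subtopology_Int openin_vietoris_plus \<open>openin X W\<close>)
  qed
  have "homeomorphic_maps X (subtopology (vietoris X) ?S) (\<lambda>x. {x}) the_elem"
    using to_S from_S topspace_S by (auto simp: homeomorphic_maps_def)
  then show ?thesis
    unfolding embedding_map_def homeomorphic_map_maps by blast
qed

theorem proposition2p6:
  fixes X :: "'a topology"
  shows "Gamma_embedded X (vietoris X) \<and>
         Gamma_embedding_via X (vietoris X) (hyper_sigma X) (\<lambda>x. {x})"
proof -
  have "semigroup_hom X (vietoris X) (hyper_sigma X)"
    by (simp add: semigroup_hom_def hyper_sigma_in_Gamma hyper_sigma_map_comp)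
  then have "Gamma_embedding_via X (vietoris X) (hyper_sigma X) (\<lambda>x. {x})"
    by (simp add: Gamma_embedding_via_def embedding_map_singleton_vietoris
        hyper_sigma_singleton domIff)
  then show ?thesis
    unfolding Gamma_embedded_def by blast
qed

end
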